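(* Let $(D,S,t_{\max})$ and $(D',S',t'_{\max})$ both satisfy the standing assumptions below with the same initial moment $t_{\min}$, and let $0\le k_{\min}<k_{\max}$. If their far-field patterns satisfy $w^\infty(\hat x,k)=w'^\infty(\hat x,k)$ for all $\hat x\in\mathbb S^2$ and all $k\in[k_{\min},k_{\max}]$, then $\mathrm{ch}(D)=\mathrm{ch}(D')$, where $\mathrm{ch}$ denotes the convex hull.
   Context: Standing assumptions on $(D,S,t_{\max})$: $D\subset\mathbb R^3$ is a bounded Lipschitz domain (open, connected) with $\mathbb R^3\setminus\overline D$ connected; $0\le t_{\min}<t_{\max}$; $S\in C([t_{\min},t_{\max}];L^\infty(D))$ is real-valued with $S\ge c_0>0$ a.e. on $D\times[t_{\min},t_{\max}]$ for some $c_0>0$. Far-field pattern: $w^\infty(\hat x,k)=\frac{1}{\sqrt{2\pi}}\int_{t_{\min}}^{t_{\max}}\int_D e^{{\rm i}k(t-\hat x\cdot y)}S(y,t)\,dy\,dt$, $\hat x\in\mathbb S^2$, $k\in\mathbb R$. *)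

theory Defs
  imports "HOL-Analysis.Analysis"
begin

definition lipschitz_domain :: "(real^3) set \<Rightarrow> bool" where
  "lipschitz_domain D \<longleftrightarrow>
     D \<noteq> {} \<and> open D \<and> connected D \<and> bounded D \<and>
     (\<forall>x\<in>frontier D. \<exists>r>0. \<exists>R::real^3 \<Rightarrow> real^3. \<exists>g::real \<times> real \<Rightarrow> real. \<exists>L.
        orthogonal_transformation R \<and> L-lipschitz_on UNIV g \<and>
        D \<inter> ball x r =
          {y \<in> ball x r. (R (y - x)) $ 3 < g ((R (y - x)) $ 1, (R (y - x)) $ 2)})"

text \<open>S y t is a representative of the source;
for every t, S(.,t) is a Lebesgue-measurable essentially bounded function on D (an element of
L^infinity(D)), t maps continuously into L^infinity(D), and S >= c0 > 0 a.e.\<close>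
definition standing :: "(real^3) set \<Rightarrow> (real^3 \<Rightarrow> real \<Rightarrow> real) \<Rightarrow> real \<Rightarrow> real \<Rightarrow> bool" where
  "standing D S tmin tmax \<longleftrightarrow>
     lipschitz_domain D \<and> connected (- closure D) \<and> 0 \<le> tmin \<and> tmin < tmax \<and>
     (\<forall>t\<in>{tmin..tmax}. (\<lambda>y. S y t) \<in> borel_measurable (lebesgue_on D) \<and>
        (\<exists>B. AE y in lebesgue_on D. \<bar>S y t\<bar> \<le> B)) \<and>
     (\<forall>t\<in>{tmin..tmax}. \<forall>e>0. \<exists>d>0. \<forall>s\<in>{tmin..tmax}. \<bar>s - t\<bar> < d \<longrightarrow>
        (AE y in lebesgue_on D. \<bar>S y s - S y t\<bar> \<le> e)) \<and>
     (\<exists>c0>0. \<forall>t\<in>{tmin..tmax}. AE y in lebesgue_on D. c0 \<le> S y t)"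

definition far_field ::
  "(real^3) set \<Rightarrow> (real^3 \<Rightarrow> real \<Rightarrow> real) \<Rightarrow> real \<Rightarrow> real \<Rightarrow> real^3 \<Rightarrow> real \<Rightarrow> complex" where
  "far_field D S tmin tmax xh k =
     complex_of_real (1 / sqrt (2 * pi)) *
     (LINT t:{tmin..tmax}|lebesgue.
        (LINT y:D|lebesgue. exp (\<i> * complex_of_real (k * (t - xh \<bullet> y))) * complex_of_real (S y t)))"

end

theory Submission
  imports Defs "HOL-Complex_Analysis.Complex_Analysis"
begin

text \<open>Fix a unit direction \<open>u\<close>. The Laplace transform in the retarded time \<open>t - u \<bullet> y\<close>,
  \<open>\<Phi>\<^sub>u(w) = \<integral>\<integral> exp (w (t - u \<bullet> y)) S(y,t) dy dt\<close>, is entire (its Taylor coefficients are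
  the moments of the retarded time), and the far-field pattern in direction \<open>u\<close> is
  \<open>\<Phi>\<^sub>u(i k) / \<surd>(2\<pi>)\<close>. Equal far fields on a wavenumber interval therefore give equal
  transforms everywhere. With \<open>h\<^sub>D\<close> the support function of \<open>D\<close>, for \<open>\<sigma> \<ge> 0\<close> we have
  \<open>\<Phi>\<^sub>u(-\<sigma>) \<le> C exp (\<sigma> (h\<^sub>D(u) - t\<^sub>m\<^sub>i\<^sub>n))\<close> because \<open>S\<close> is bounded, and
  \<open>\<Phi>\<^sub>u(-\<sigma>) \<ge> c\<^sub>\<epsilon> exp (\<sigma> (h\<^sub>D(u) - t\<^sub>m\<^sub>i\<^sub>n - \<epsilon>))\<close> because \<open>S \<ge> c\<^sub>0 > 0\<close> on the part of \<open>D\<close>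
  near the supporting plane at times near \<open>t\<^sub>m\<^sub>i\<^sub>n\<close>. So both domains have the same support
  function, hence the same closed convex hull, and open convex sets are the interiors of their
  closures.\<close>

definition support_function :: "'a::real_inner set \<Rightarrow> 'a \<Rightarrow> real" where
  "support_function A u = (SUP y\<in>A. u \<bullet> y)"

lemma bdd_above_inner_image:
  fixes A :: "'a::real_inner set"
  assumes "bounded A"
  shows "bdd_above ((\<bullet>) u ` A)"
proof -
  obtain R where "\<forall>y\<in>A. norm y \<le> R"
    using assms bounded_pos by metis
  then have "u \<bullet> y \<le> norm u * R" if "y \<in> A" for y
    using that by (metis Cauchy_Schwarz_ineq2 abs_le_D1 mult_left_mono norm_ge_zero order_trans)
  then show ?thesis by (intro bdd_aboveI2)
qed

lemma inner_le_support_function: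
  fixes A :: "'a::real_inner set"
  assumes "bounded A" "y \<in> A"
  shows "u \<bullet> y \<le> support_function A u"
  unfolding support_function_def
  by (rule cSup_upper) (use assms bdd_above_inner_image in auto)

lemma support_function_le:
  fixes A :: "'a::real_inner set"
  assumes "A \<noteq> {}" "\<And>y. y \<in> A \<Longrightarrow> u \<bullet> y \<le> c"
  shows "support_function A u \<le> c"
  unfolding support_function_def using assms by (intro cSUP_least) auto

lemma closure_convex_hull_subset_halfspace:
  fixes A :: "'a::real_inner set"
  assumes "bounded A"
  shows "closure (convex hull A) \<subseteq> {x. u \<bullet> x \<le> support_function A u}"
proof (intro closure_minimal hull_minimal subsetI)
  show "y \<in> {x. u \<bullet> x \<le> support_function A u}" if "y \<in> A" for y
    using inner_le_support_function[OF assms that] by simp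
qed (auto intro: convex_halfspace_le closed_halfspace_le)

lemma closure_convex_hull_subset_of_support_function_le:
  fixes A B :: "'a::euclidean_space set"
  assumes "bounded A" and "B \<noteq> {}"
    and le: "\<And>u. norm u = 1 \<Longrightarrow> support_function A u \<le> support_function B u"
  shows "closure (convex hull A) \<subseteq> closure (convex hull B)"
proof -
  have B_closure: "y \<in> closure (convex hull B)" if "y \<in> B" for y
    using that by (rule subsetD[OF closure_subset hull_inc])
  have halfspace: "closure (convex hull A) \<subseteq> {x. a \<bullet> x \<le> b}"
    if B_sub: "closure (convex hull B) \<subseteq> {x. a \<bullet> x \<le> b}" for a b
  proof (cases "a = 0")
    case True
    obtain y where "y \<in> B" using \<open>B \<noteq> {}\<close> by blast
    then have "a \<bullet> y \<le> b" using B_sub B_closure by auto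
    then show ?thesis using True by auto
  next
    case False
    define u where "u = a /\<^sub>R norm a"
    have u_inner: "u \<bullet> x = (a \<bullet> x) / norm a" for x
      by (simp add: u_def divide_inverse_commute)
    have "support_function B u \<le> b / norm a"
    proof (rule support_function_le[OF \<open>B \<noteq> {}\<close>])
      fix y assume "y \<in> B"
      then have "a \<bullet> y \<le> b" using B_sub B_closure by auto
      then show "u \<bullet> y \<le> b / norm a" by (simp add: u_inner divide_right_mono)
    qed
    moreover have "norm u = 1" using False by (simp add: u_def)
    ultimately have "support_function A u \<le> b / norm a" using le by fastforce
    then have "closure (convex hull A) \<subseteq> {x. u \<bullet> x \<le> b / norm a}"
      using closure_convex_hull_subset_halfspace[OF \<open>bounded A\<close>, of u] by auto
    also have "\<dots> = {x. a \<bullet> x \<le> b}" using False by (auto simp: u_inner divide_le_cancel)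
    finally show ?thesis .
  qed
  define \<H> where "\<H> = {H. closure (convex hull B) \<subseteq> H \<and> (\<exists>a b. H = {x. a \<bullet> x \<le> b})}"
  have "closure (convex hull B) = \<Inter>\<H>"
    unfolding \<H>_def by (rule convex_halfspace_intersection) (auto simp: convex_closure)
  moreover have "closure (convex hull A) \<subseteq> \<Inter>\<H>"
    using halfspace by (intro Inter_greatest) (auto simp: \<H>_def)
  ultimately show ?thesis by simp
qed

lemma convex_hull_eq_of_closure_eq:
  fixes A B :: "'a::euclidean_space set"
  assumes "open A" "open B" "closure (convex hull A) = closure (convex hull B)"
  shows "convex hull A = convex hull B"
  using assms open_convex_hull convex_interior_closure[OF convex_convex_hull]
  by (metis interior_open)

lemma measure_pos_near_support_function:
  fixes D :: "'a::euclidean_space set"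
  assumes "open D" "bounded D" "D \<noteq> {}" "e > 0"
  shows "0 < measure lebesgue {y \<in> D. support_function D u - e < u \<bullet> y}"
proof -
  define U where "U = {y \<in> D. support_function D u - e < u \<bullet> y}"
  have "U = D \<inter> {y. support_function D u - e < u \<bullet> y}"
    unfolding U_def by blast
  then have "open U"
    using assms(1) by (simp add: open_Int open_halfspace_gt)
  have "support_function D u - e < support_function D u"
    using assms(4) by simp
  then obtain y where "y \<in> D" "support_function D u - e < u \<bullet> y"
    using less_cSUP_iff[OF assms(3) bdd_above_inner_image[OF assms(2)]]
    unfolding support_function_def by blast
  then have "U \<noteq> {}" unfolding U_def by blast
  have "U \<in> lmeasurable"
    using \<open>open U\<close> assms(2) unfolding U_def
    by (intro bounded_set_imp_lmeasurable) (auto intro: bounded_subset borel_open)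
  moreover have "\<not> negligible U"
    using \<open>open U\<close> \<open>U \<noteq> {}\<close> by (rule open_not_negligible)
  ultimately show ?thesis
    unfolding U_def[symmetric] by (simp add: negligible_iff_measure0 zero_less_measure_iff)
qed

lemma (in finite_measure) norm_integral_le_measure_mult:
  fixes f :: "'a \<Rightarrow> 'b::{banach,second_countable_topology}"
  assumes "f \<in> borel_measurable M" and "AE x in M. norm (f x) \<le> c"
  shows "norm (integral\<^sup>L M f) \<le> measure M (space M) * c"
proof -
  have "integrable M f"
    using assms(2,1) by (rule integrable_const_bound)
  then have "norm (integral\<^sup>L M f) \<le> (\<integral>x. c \<partial>M)"
    using assms(2) by (intro order_trans[OF integral_norm_bound] integral_mono_AE) auto
  then show ?thesis by simp
qed

lemma (in finite_measure) measure_mult_le_integral: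
  fixes f :: "'a \<Rightarrow> real"
  assumes "integrable M f" "A \<in> sets M"
    and "AE x in M. 0 \<le> f x" and "AE x in M. x \<in> A \<longrightarrow> c \<le> f x"
  shows "measure M A * c \<le> integral\<^sup>L M f"
proof -
  have "measure M A * c = (\<integral>x. indicator A x * c \<partial>M)"
    using assms(2) by (simp add: Int_absorb2 sets.sets_into_space emeasure_eq_measure)
  also have "\<dots> \<le> integral\<^sup>L M f"
  proof (rule integral_mono_AE[OF _ assms(1)])
    show "integrable M (\<lambda>x. indicator A x * c)"
      using assms(2) emeasure_finite[of A]
      by (intro integrable_mult_left integrable_real_indicator) (simp_all add: less_top[symmetric])
    show "AE x in M. indicator A x * c \<le> f x"
      using assms(3,4) by eventually_elim (simp split: split_indicator)
  qed
  finally show ?thesis .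
qed

lemma measure_lebesgue_on_Icc:
  fixes a b c d :: real
  assumes "{a..b} \<subseteq> {c..d}" "a \<le> b"
  shows "measure (lebesgue_on {c..d}) {a..b} = b - a"
  using assms by (simp add: measure_restrict_space)

lemma set_integral_eq_integral_lebesgue_on:
  fixes f :: "'a::euclidean_space \<Rightarrow> 'b::{banach,second_countable_topology}"
  assumes "A \<in> sets lebesgue"
  shows "(LINT y:A|lebesgue. f y) = (\<integral>y. f y \<partial>lebesgue_on A)"
  using assms by (simp add: set_lebesgue_integral_def integral_restrict_space)

lemma continuous_bounded_on_interval:
  fixes g :: "real \<Rightarrow> 'a::real_normed_vector"
  assumes "continuous_on UNIV g"
  shows "\<exists>K. \<forall>s. \<bar>s\<bar> \<le> M \<longrightarrow> norm (g s) \<le> K"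
proof -
  have "compact (g ` {-M..M})"
    by (rule compact_continuous_image) (use assms continuous_on_subset in auto)
  then obtain K where "\<forall>z\<in>g ` {-M..M}. norm z \<le> K"
    using compact_imp_bounded bounded_iff by metis
  then show ?thesis by (intro exI[of _ K]) (auto simp: abs_le_iff)
qed

lemma norm_exp_partial_sum_le:
  fixes z :: "'a::{real_normed_algebra_1,banach}"
  shows "norm (\<Sum>n<N. z ^ n /\<^sub>R fact n) \<le> exp (norm z)"
proof -
  have "norm (\<Sum>n<N. z ^ n /\<^sub>R fact n) \<le> (\<Sum>n<N. norm z ^ n /\<^sub>R fact n)"
    by (rule order_trans[OF norm_sum sum_mono]) (simp add: norm_power_ineq divide_right_mono)
  also have "\<dots> \<le> (\<Sum>n. norm z ^ n /\<^sub>R fact n)"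
    using summable_exp_generic by (rule sum_le_suminf) auto
  also have "\<dots> = exp (norm z)"
    by (simp add: exp_def)
  finally show ?thesis .
qed

lemma exp_of_real_mult:
  "exp (of_real \<sigma> * of_real r) * of_real c = (of_real (exp (\<sigma> * r) * c) :: complex)"
  by (metis exp_of_real of_real_mult)

lemma exp_growth_le:
  fixes a b c C :: real
  assumes "c > 0" and growth: "\<And>\<sigma>. \<sigma> \<ge> 0 \<Longrightarrow> c * exp (\<sigma> * b) \<le> C * exp (\<sigma> * a)"
  shows "b \<le> a"
proof (rule ccontr)
  assume "\<not> b \<le> a"
  define \<sigma> where "\<sigma> = (\<bar>C\<bar> / c + 1) / (b - a)"
  have "\<sigma> \<ge> 0" and \<sigma>: "\<sigma> * (b - a) = \<bar>C\<bar> / c + 1"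
    using \<open>\<not> b \<le> a\<close> \<open>c > 0\<close> by (auto simp: \<sigma>_def)
  have "c * exp (\<sigma> * (b - a)) * exp (\<sigma> * a) = c * exp (\<sigma> * b)"
    by (simp add: algebra_simps flip: exp_add)
  also have "\<dots> \<le> C * exp (\<sigma> * a)"
    using growth[OF \<open>\<sigma> \<ge> 0\<close>] .
  finally have "c * exp (\<sigma> * (b - a)) \<le> C"
    by simp
  moreover have "c * (1 + \<sigma> * (b - a)) \<le> c * exp (\<sigma> * (b - a))"
    using \<open>c > 0\<close> exp_ge_add_one_self by simp
  moreover have "c * (1 + \<sigma> * (b - a)) = \<bar>C\<bar> + 2 * c"
    using \<open>c > 0\<close> by (simp add: \<sigma> field_simps)
  ultimately show False
    using \<open>c > 0\<close> by linarith
qed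

lemma entire_eq_of_eq_on_imaginary_segment:
  assumes "f holomorphic_on UNIV" "g holomorphic_on UNIV" "a < b"
    and eq: "\<And>k. k \<in> {a..b} \<Longrightarrow> f (\<i> * of_real k) = g (\<i> * of_real k)"
  shows "f = g"
proof
  fix w
  define U where "U = (\<lambda>k. \<i> * complex_of_real k) ` {a..b}"
  have limpt: "\<i> * of_real a islimpt U"
    unfolding islimpt_approachable
  proof (intro allI impI)
    fix e :: real assume "e > 0"
    define k where "k = a + min (e / 2) (b - a)"
    have "k \<in> {a..b}" "k \<noteq> a" "\<bar>k - a\<bar> < e"
      using \<open>e > 0\<close> \<open>a < b\<close> by (auto simp: k_def)
    moreover have "dist (\<i> * of_real k) (\<i> * of_real a) = \<bar>k - a\<bar>"
      by (simp add: dist_norm norm_mult flip: right_diff_distrib of_real_diff)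
    ultimately show "\<exists>z\<in>U. z \<noteq> \<i> * of_real a \<and> dist z (\<i> * of_real a) < e"
      unfolding U_def by (intro bexI[of _ "\<i> * of_real k"]) auto
  qed
  have "f w - g w = 0"
    by (rule analytic_continuation[where f = "\<lambda>z. f z - g z" and S = UNIV, OF _ _ _ _ _ limpt])
       (use assms in \<open>auto simp: U_def intro: holomorphic_intros\<close>)
  then show "f w = g w" by simp
qed

locale source =
  fixes D :: "(real^3) set" and S :: "real^3 \<Rightarrow> real \<Rightarrow> real" and tmin tmax :: real
  assumes standing: "standing D S tmin tmax"
begin

lemma
  shows open_domain: "open D" and bounded_domain: "bounded D" and domain_nonempty: "D \<noteq> {}"
    and tmin_less_tmax: "tmin < tmax"
  using standing unfolding standing_def lipschitz_domain_def by auto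

lemma lmeasurable_domain: "D \<in> lmeasurable"
  using bounded_domain open_domain by (intro bounded_set_imp_lmeasurable) auto

sublocale spatial: finite_measure "lebesgue_on D"
  by (rule finite_measure_lebesgue_on[OF lmeasurable_domain])

sublocale temporal: finite_measure "lebesgue_on {tmin..tmax}"
  by (rule finite_measure_lebesgue_on) simp

lemma
  assumes "t \<in> {tmin..tmax}"
  shows measurable_slice: "(\<lambda>y. S y t) \<in> borel_measurable (lebesgue_on D)"
    and essentially_bounded_slice: "\<exists>B. AE y in lebesgue_on D. \<bar>S y t\<bar> \<le> B"
  using standing assms unfolding standing_def by blast+

lemma slice_continuous:
  assumes "t \<in> {tmin..tmax}" "e > 0"
  shows "\<exists>d>0. \<forall>s\<in>{tmin..tmax}. \<bar>s - t\<bar> < d \<longrightarrow> (AE y in lebesgue_on D. \<bar>S y s - S y t\<bar> \<le> e)"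
  using standing assms unfolding standing_def by blast

lemma slice_lower_bound: "\<exists>c0>0. \<forall>t\<in>{tmin..tmax}. AE y in lebesgue_on D. c0 \<le> S y t"
  using standing unfolding standing_def by blast

text \<open>Continuity into \<open>L\<^sup>\<infinity>(D)\<close> on the compact time interval makes the pointwise essential
  bounds uniform.\<close>
lemma slice_uniform_bound: "\<exists>B. \<forall>t\<in>{tmin..tmax}. AE y in lebesgue_on D. \<bar>S y t\<bar> \<le> B"
proof -
  have "\<forall>t\<in>{tmin..tmax}. \<exists>B. AE y in lebesgue_on D. \<bar>S y t\<bar> \<le> B"
    using essentially_bounded_slice by blast
  from bchoice[OF this] obtain Bt where Bt: "\<forall>t\<in>{tmin..tmax}. AE y in lebesgue_on D. \<bar>S y t\<bar> \<le> Bt t"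
    by blast
  have "\<forall>t\<in>{tmin..tmax}. \<exists>d>0. \<forall>s\<in>{tmin..tmax}. \<bar>s - t\<bar> < d \<longrightarrow>
      (AE y in lebesgue_on D. \<bar>S y s - S y t\<bar> \<le> 1)"
    using slice_continuous[OF _ zero_less_one] by blast
  from bchoice[OF this] obtain d where d: "\<forall>t\<in>{tmin..tmax}. d t > 0 \<and> (\<forall>s\<in>{tmin..tmax}. \<bar>s - t\<bar> < d t \<longrightarrow>
      (AE y in lebesgue_on D. \<bar>S y s - S y t\<bar> \<le> 1))"
    by blast
  have cover: "{tmin..tmax} \<subseteq> (\<Union>t\<in>{tmin..tmax}. ball t (d t))"
    using d by force
  obtain C where C: "C \<subseteq> {tmin..tmax}" "finite C" "{tmin..tmax} \<subseteq> (\<Union>t\<in>C. ball t (d t))"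
    using compactE_image[OF compact_Icc _ cover] by auto
  show ?thesis
  proof (intro exI ballI)
    fix s assume s: "s \<in> {tmin..tmax}"
    then obtain t where t: "t \<in> C" "s \<in> ball t (d t)"
      using C by blast
    then have tT: "t \<in> {tmin..tmax}" and "\<bar>s - t\<bar> < d t"
      using C by (auto simp: dist_real_def)
    then have "AE y in lebesgue_on D. \<bar>S y s - S y t\<bar> \<le> 1"
      using d s by blast
    moreover have "AE y in lebesgue_on D. \<bar>S y t\<bar> \<le> Bt t"
      using Bt tT by blast
    moreover have "\<bar>Bt t\<bar> + 1 \<le> (\<Sum>t\<in>C. \<bar>Bt t\<bar> + 1)"
      by (rule member_le_sum) (use t C in auto)
    ultimately show "AE y in lebesgue_on D. \<bar>S y s\<bar> \<le> (\<Sum>t\<in>C. \<bar>Bt t\<bar> + 1)"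
      by (auto elim: eventually_elim2)
  qed
qed

lemma retarded_time_bound: "\<exists>M. \<forall>y\<in>D. \<forall>t\<in>{tmin..tmax}. \<bar>t - u \<bullet> y\<bar> \<le> M"
proof -
  obtain R where R: "\<forall>y\<in>D. norm y \<le> R"
    using bounded_domain bounded_pos by metis
  show ?thesis
  proof (intro exI ballI)
    fix y t assume y: "y \<in> D" and t: "t \<in> {tmin..tmax}"
    have "\<bar>u \<bullet> y\<bar> \<le> norm u * norm y"
      by (rule Cauchy_Schwarz_ineq2)
    also have "\<dots> \<le> norm u * R"
      using R y by (simp add: mult_left_mono)
    finally show "\<bar>t - u \<bullet> y\<bar> \<le> \<bar>tmin\<bar> + \<bar>tmax\<bar> + norm u * R"
      using t by auto
  qed
qed

lemma retarded_kernel_bound: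
  assumes "continuous_on UNIV g"
  shows "\<exists>K. \<forall>y\<in>D. \<forall>t\<in>{tmin..tmax}. norm (g (t - u \<bullet> y)) \<le> K"
proof -
  obtain M where "\<forall>y\<in>D. \<forall>t\<in>{tmin..tmax}. \<bar>t - u \<bullet> y\<bar> \<le> M"
    using retarded_time_bound by blast
  moreover obtain K where "\<forall>s. \<bar>s\<bar> \<le> M \<longrightarrow> norm (g s) \<le> K"
    using continuous_bounded_on_interval[OF assms] by blast
  ultimately show ?thesis by (intro exI[of _ K]) simp
qed

lemma norm_spatial_integral_le:
  fixes f :: "real^3 \<Rightarrow> 'b::{banach,second_countable_topology}"
  assumes "f \<in> borel_measurable (lebesgue_on D)" "AE y in lebesgue_on D. norm (f y) \<le> c"
  shows "norm (\<integral>y. f y \<partial>lebesgue_on D) \<le> measure lebesgue D * c"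
  using spatial.norm_integral_le_measure_mult[OF assms] lmeasurable_domain
  by (simp add: measure_restrict_space)

definition retarded_integral :: "real^3 \<Rightarrow> (real \<Rightarrow> complex) \<Rightarrow> real \<Rightarrow> complex" where
  "retarded_integral u g t = (\<integral>y. g (t - u \<bullet> y) * of_real (S y t) \<partial>lebesgue_on D)"

definition retarded_transform :: "real^3 \<Rightarrow> (real \<Rightarrow> complex) \<Rightarrow> complex" where
  "retarded_transform u g = (\<integral>t. retarded_integral u g t \<partial>lebesgue_on {tmin..tmax})"

lemma measurable_retarded_integrand:
  fixes g :: "real \<Rightarrow> complex"
  assumes "continuous_on UNIV g" "t \<in> {tmin..tmax}"
  shows "(\<lambda>y. g (t - u \<bullet> y) * of_real (S y t)) \<in> borel_measurable (lebesgue_on D)"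
proof (rule borel_measurable_times)
  have "continuous_on D (\<lambda>y. g (t - u \<bullet> y))"
    by (rule continuous_on_compose2[OF assms(1)]) (auto intro!: continuous_intros)
  then show "(\<lambda>y. g (t - u \<bullet> y)) \<in> borel_measurable (lebesgue_on D)"
    using open_domain by (intro continuous_imp_measurable_on_sets_lebesgue) auto
  show "(\<lambda>y. complex_of_real (S y t)) \<in> borel_measurable (lebesgue_on D)"
    using measurable_slice[OF assms(2)] by measurable
qed

lemma AE_norm_retarded_integrand_le:
  fixes g :: "real \<Rightarrow> complex"
  assumes "\<forall>y\<in>D. norm (g (t - u \<bullet> y)) \<le> K" and "AE y in lebesgue_on D. \<bar>S y t\<bar> \<le> B"
  shows "AE y in lebesgue_on D. norm (g (t - u \<bullet> y) * of_real (S y t)) \<le> K * B"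
  using AE_space assms(2)
proof eventually_elim
  case (elim y)
  then have "norm (g (t - u \<bullet> y)) \<le> K" using assms(1) by simp
  then show ?case
    using elim by (simp add: norm_mult mult_mono')
qed

lemma integrable_retarded_integrand:
  fixes g :: "real \<Rightarrow> complex"
  assumes "continuous_on UNIV g" "t \<in> {tmin..tmax}"
  shows "integrable (lebesgue_on D) (\<lambda>y. g (t - u \<bullet> y) * of_real (S y t))"
proof -
  obtain K where "\<forall>y\<in>D. \<forall>t\<in>{tmin..tmax}. norm (g (t - u \<bullet> y)) \<le> K"
    using retarded_kernel_bound[OF assms(1)] by blast
  moreover obtain B where "AE y in lebesgue_on D. \<bar>S y t\<bar> \<le> B"
    using essentially_bounded_slice[OF assms(2)] by blast
  ultimately show ?thesis
    using assms by (intro spatial.integrable_const_bound[where B = "K * B"]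
        AE_norm_retarded_integrand_le measurable_retarded_integrand) auto
qed

lemma norm_retarded_integral_le:
  fixes g :: "real \<Rightarrow> complex"
  assumes "continuous_on UNIV g" "t \<in> {tmin..tmax}"
    and "\<forall>y\<in>D. norm (g (t - u \<bullet> y)) \<le> K" and "AE y in lebesgue_on D. \<bar>S y t\<bar> \<le> B"
  shows "norm (retarded_integral u g t) \<le> measure lebesgue D * (K * B)"
  unfolding retarded_integral_def using assms
  by (intro norm_spatial_integral_le measurable_retarded_integrand AE_norm_retarded_integrand_le)

lemma norm_retarded_integral_diff_le:
  fixes g :: "real \<Rightarrow> complex"
  assumes g: "continuous_on UNIV g" and s: "s \<in> {tmin..tmax}" and t: "t \<in> {tmin..tmax}"
    and kernel_diff: "\<forall>y\<in>D. norm (g (s - u \<bullet> y) - g (t - u \<bullet> y)) \<le> a"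
    and kernel: "\<forall>y\<in>D. norm (g (t - u \<bullet> y)) \<le> K"
    and "AE y in lebesgue_on D. \<bar>S y s\<bar> \<le> B" and "AE y in lebesgue_on D. \<bar>S y s - S y t\<bar> \<le> b"
  shows "norm (retarded_integral u g s - retarded_integral u g t) \<le> measure lebesgue D * (a * B + K * b)"
proof -
  let ?f = "\<lambda>r y. g (r - u \<bullet> y) * of_real (S y r)"
  have "AE y in lebesgue_on D. norm (?f s y - ?f t y) \<le> a * B + K * b"
    using AE_space assms(6,7)
  proof eventually_elim
    case (elim y)
    have "?f s y - ?f t y = (g (s - u \<bullet> y) - g (t - u \<bullet> y)) * of_real (S y s)
        + g (t - u \<bullet> y) * of_real (S y s - S y t)"
      by (simp add: algebra_simps)
    also have "norm \<dots> \<le> norm (g (s - u \<bullet> y) - g (t - u \<bullet> y)) * \<bar>S y s\<bar>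
        + norm (g (t - u \<bullet> y)) * \<bar>S y s - S y t\<bar>"
      by (rule order_trans[OF norm_triangle_ineq]) (simp add: norm_mult flip: of_real_diff)
    also have "\<dots> \<le> a * B + K * b"
      using elim kernel_diff kernel by (intro add_mono mult_mono') auto
    finally show ?case .
  qed
  then have "norm (\<integral>y. ?f s y - ?f t y \<partial>lebesgue_on D) \<le> measure lebesgue D * (a * B + K * b)"
    by (intro norm_spatial_integral_le borel_measurable_diff measurable_retarded_integrand g s t)
  moreover have "(\<integral>y. ?f s y - ?f t y \<partial>lebesgue_on D) = retarded_integral u g s - retarded_integral u g t"
    unfolding retarded_integral_def
    by (intro Bochner_Integration.integral_diff integrable_retarded_integrand g s t)
  ultimately show ?thesis by simp
qed

lemma continuous_on_retarded_integral:
  fixes g :: "real \<Rightarrow> complex"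
  assumes g: "continuous_on UNIV g"
  shows "continuous_on {tmin..tmax} (retarded_integral u g)"
  unfolding continuous_on_iff
proof (intro ballI allI impI)
  fix t e :: real assume t: "t \<in> {tmin..tmax}" and "e > 0"
  obtain M where M: "\<forall>y\<in>D. \<forall>t\<in>{tmin..tmax}. \<bar>t - u \<bullet> y\<bar> \<le> M"
    using retarded_time_bound by blast
  obtain K where K: "\<forall>y\<in>D. \<forall>t\<in>{tmin..tmax}. norm (g (t - u \<bullet> y)) \<le> K"
    using retarded_kernel_bound[OF g] by blast
  obtain B where B: "\<forall>t\<in>{tmin..tmax}. AE y in lebesgue_on D. \<bar>S y t\<bar> \<le> B"
    using slice_uniform_bound by blast
  define \<mu> where "\<mu> = measure lebesgue D"
  define \<epsilon> where "\<epsilon> = e / ((\<mu> + 1) * (\<bar>K\<bar> + \<bar>B\<bar> + 1))"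
  have "\<mu> \<ge> 0"
    by (simp add: \<mu>_def)
  then have "\<epsilon> > 0"
    using \<open>e > 0\<close> by (simp add: \<epsilon>_def)
  have "uniformly_continuous_on {-M..M} g"
    by (rule compact_uniformly_continuous) (use g continuous_on_subset in auto)
  then obtain d1 where "d1 > 0"
    and d1: "\<forall>r\<in>{-M..M}. \<forall>r'\<in>{-M..M}. dist r' r < d1 \<longrightarrow> dist (g r') (g r) < \<epsilon>"
    using \<open>\<epsilon> > 0\<close> unfolding uniformly_continuous_on_def by metis
  obtain d2 where "d2 > 0"
    and d2: "\<forall>s\<in>{tmin..tmax}. \<bar>s - t\<bar> < d2 \<longrightarrow> (AE y in lebesgue_on D. \<bar>S y s - S y t\<bar> \<le> \<epsilon>)"
    using slice_continuous[OF t \<open>\<epsilon> > 0\<close>] by blast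
  show "\<exists>d>0. \<forall>s\<in>{tmin..tmax}. dist s t < d \<longrightarrow>
      dist (retarded_integral u g s) (retarded_integral u g t) < e"
  proof (intro exI[of _ "min d1 d2"] conjI ballI impI)
    show "min d1 d2 > 0" using \<open>d1 > 0\<close> \<open>d2 > 0\<close> by simp
    fix s assume s: "s \<in> {tmin..tmax}" and "dist s t < min d1 d2"
    then have "\<bar>s - t\<bar> < d1" "\<bar>s - t\<bar> < d2" by (auto simp: dist_real_def)
    have "norm (g (s - u \<bullet> y) - g (t - u \<bullet> y)) \<le> \<epsilon>" if "y \<in> D" for y
    proof -
      have "\<bar>s - u \<bullet> y\<bar> \<le> M" "\<bar>t - u \<bullet> y\<bar> \<le> M"
        using M that s t by blast+
      then have "s - u \<bullet> y \<in> {-M..M}" "t - u \<bullet> y \<in> {-M..M}"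
        by (auto simp: abs_le_iff)
      moreover have "dist (s - u \<bullet> y) (t - u \<bullet> y) < d1"
        using \<open>\<bar>s - t\<bar> < d1\<close> by (simp add: dist_real_def)
      ultimately have "dist (g (s - u \<bullet> y)) (g (t - u \<bullet> y)) < \<epsilon>"
        using d1 by blast
      then show ?thesis
        by (simp add: dist_norm)
    qed
    then have "norm (retarded_integral u g s - retarded_integral u g t) \<le> \<mu> * (\<epsilon> * B + K * \<epsilon>)"
      unfolding \<mu>_def using K t d2 s \<open>\<bar>s - t\<bar> < d2\<close>
      by (intro norm_retarded_integral_diff_le[OF g s t _ _ bspec[OF B s]]) auto
    also have "\<dots> \<le> \<epsilon> * (\<mu> * (\<bar>K\<bar> + \<bar>B\<bar>))"
    proof -
      have "\<epsilon> * \<mu> * B \<le> \<epsilon> * \<mu> * \<bar>B\<bar>" "\<epsilon> * \<mu> * K \<le> \<epsilon> * \<mu> * \<bar>K\<bar>"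
        using \<open>\<mu> \<ge> 0\<close> \<open>\<epsilon> > 0\<close> by (intro mult_left_mono abs_ge_self; simp)+
      then show ?thesis by (simp add: algebra_simps)
    qed
    also have "\<dots> < \<epsilon> * ((\<mu> + 1) * (\<bar>K\<bar> + \<bar>B\<bar> + 1))"
      using \<open>\<mu> \<ge> 0\<close> \<open>\<epsilon> > 0\<close> by (simp add: algebra_simps add_pos_nonneg)
    also have "\<dots> = e"
      using \<open>\<mu> \<ge> 0\<close> by (simp add: \<epsilon>_def)
    finally show "dist (retarded_integral u g s) (retarded_integral u g t) < e"
      by (simp add: dist_norm)
  qed
qed

lemma integrable_retarded_integral:
  fixes g :: "real \<Rightarrow> complex"
  assumes "continuous_on UNIV g"
  shows "integrable (lebesgue_on {tmin..tmax}) (retarded_integral u g)"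
  by (rule continuous_imp_integrable_real[OF continuous_on_retarded_integral[OF assms]])

lemma norm_retarded_transform_le:
  fixes g :: "real \<Rightarrow> complex"
  assumes "continuous_on UNIV g" and K: "\<forall>y\<in>D. \<forall>t\<in>{tmin..tmax}. norm (g (t - u \<bullet> y)) \<le> K"
    and B: "\<forall>t\<in>{tmin..tmax}. AE y in lebesgue_on D. \<bar>S y t\<bar> \<le> B"
  shows "norm (retarded_transform u g) \<le> (tmax - tmin) * (measure lebesgue D * (K * B))"
proof -
  have "norm (retarded_transform u g)
      \<le> measure (lebesgue_on {tmin..tmax}) (space (lebesgue_on {tmin..tmax})) * (measure lebesgue D * (K * B))"
    unfolding retarded_transform_def
  proof (rule temporal.norm_integral_le_measure_mult)
    show "retarded_integral u g \<in> borel_measurable (lebesgue_on {tmin..tmax})"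
      by (intro continuous_imp_measurable_on_sets_lebesgue continuous_on_retarded_integral assms) auto
    show "AE t in lebesgue_on {tmin..tmax}. norm (retarded_integral u g t) \<le> measure lebesgue D * (K * B)"
    proof (rule AE_I2)
      fix t assume "t \<in> space (lebesgue_on {tmin..tmax})"
      then have t: "t \<in> {tmin..tmax}" by simp
      show "norm (retarded_integral u g t) \<le> measure lebesgue D * (K * B)"
        using K t by (intro norm_retarded_integral_le[OF assms(1) t _ bspec[OF B t]]) auto
    qed
  qed
  then show ?thesis
    using tmin_less_tmax by (simp add: measure_lebesgue_on_Icc)
qed

lemma retarded_transform_sum:
  fixes f :: "'i \<Rightarrow> real \<Rightarrow> complex"
  assumes cont: "\<And>i. i \<in> I \<Longrightarrow> continuous_on UNIV (f i)"
  shows "retarded_transform u (\<lambda>s. \<Sum>i\<in>I. c i * f i s) = (\<Sum>i\<in>I. c i * retarded_transform u (f i))"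
proof -
  have "retarded_integral u (\<lambda>s. \<Sum>i\<in>I. c i * f i s) t = (\<Sum>i\<in>I. c i * retarded_integral u (f i) t)"
    if t: "t \<in> {tmin..tmax}" for t
  proof -
    have "retarded_integral u (\<lambda>s. \<Sum>i\<in>I. c i * f i s) t
        = (\<integral>y. (\<Sum>i\<in>I. c i * (f i (t - u \<bullet> y) * of_real (S y t))) \<partial>lebesgue_on D)"
      unfolding retarded_integral_def by (simp add: sum_distrib_right mult.assoc)
    also have "\<dots> = (\<Sum>i\<in>I. c i * retarded_integral u (f i) t)"
      unfolding retarded_integral_def
      by (subst Bochner_Integration.integral_sum)
         (auto intro!: integrable_mult_right integrable_retarded_integrand cont t)
    finally show ?thesis .
  qed
  then have "retarded_transform u (\<lambda>s. \<Sum>i\<in>I. c i * f i s)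
      = (\<integral>t. (\<Sum>i\<in>I. c i * retarded_integral u (f i) t) \<partial>lebesgue_on {tmin..tmax})"
    unfolding retarded_transform_def by (intro Bochner_Integration.integral_cong) auto
  also have "\<dots> = (\<Sum>i\<in>I. c i * retarded_transform u (f i))"
    unfolding retarded_transform_def
    by (subst Bochner_Integration.integral_sum)
       (auto intro!: integrable_mult_right integrable_retarded_integral cont)
  finally show ?thesis .
qed

lemma retarded_integral_tendsto:
  fixes G :: "nat \<Rightarrow> real \<Rightarrow> complex"
  assumes cont: "\<And>n. continuous_on UNIV (G n)" "continuous_on UNIV g"
    and lim: "\<And>s. (\<lambda>n. G n s) \<longlonglongrightarrow> g s" and t: "t \<in> {tmin..tmax}"
    and K: "\<And>n. \<forall>y\<in>D. norm (G n (t - u \<bullet> y)) \<le> K" and B: "AE y in lebesgue_on D. \<bar>S y t\<bar> \<le> B"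
  shows "(\<lambda>n. retarded_integral u (G n) t) \<longlonglongrightarrow> retarded_integral u g t"
  unfolding retarded_integral_def
proof (rule integral_dominated_convergence[where w = "\<lambda>y. K * B"])
  show "(\<lambda>y. g (t - u \<bullet> y) * of_real (S y t)) \<in> borel_measurable (lebesgue_on D)"
    "(\<lambda>y. G n (t - u \<bullet> y) * of_real (S y t)) \<in> borel_measurable (lebesgue_on D)" for n
    by (intro measurable_retarded_integrand cont t)+
  show "AE y in lebesgue_on D. (\<lambda>n. G n (t - u \<bullet> y) * of_real (S y t))
      \<longlonglongrightarrow> g (t - u \<bullet> y) * of_real (S y t)"
    by (intro AE_I2 tendsto_mult_right lim)
  show "AE y in lebesgue_on D. norm (G n (t - u \<bullet> y) * of_real (S y t)) \<le> K * B" for n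
    by (rule AE_norm_retarded_integrand_le[OF K B])
qed simp

lemma retarded_transform_tendsto:
  fixes G :: "nat \<Rightarrow> real \<Rightarrow> complex"
  assumes cont: "\<And>n. continuous_on UNIV (G n)" "continuous_on UNIV g"
    and lim: "\<And>s. (\<lambda>n. G n s) \<longlonglongrightarrow> g s"
    and bound: "\<And>M. \<exists>K. \<forall>n s. \<bar>s\<bar> \<le> M \<longrightarrow> norm (G n s) \<le> K"
  shows "(\<lambda>n. retarded_transform u (G n)) \<longlonglongrightarrow> retarded_transform u g"
proof -
  obtain M where M: "\<forall>y\<in>D. \<forall>t\<in>{tmin..tmax}. \<bar>t - u \<bullet> y\<bar> \<le> M"
    using retarded_time_bound by blast
  obtain K where K: "\<forall>n s. \<bar>s\<bar> \<le> M \<longrightarrow> norm (G n s) \<le> K"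
    using bound by blast
  have KD: "\<forall>y\<in>D. norm (G n (t - u \<bullet> y)) \<le> K" if "t \<in> {tmin..tmax}" for n t
    using M K that by simp
  obtain B where B: "\<forall>t\<in>{tmin..tmax}. AE y in lebesgue_on D. \<bar>S y t\<bar> \<le> B"
    using slice_uniform_bound by blast
  show ?thesis
    unfolding retarded_transform_def
  proof (rule integral_dominated_convergence[where w = "\<lambda>t. measure lebesgue D * (K * B)"])
    show "retarded_integral u g \<in> borel_measurable (lebesgue_on {tmin..tmax})"
      "retarded_integral u (G n) \<in> borel_measurable (lebesgue_on {tmin..tmax})" for n
      by (intro continuous_imp_measurable_on_sets_lebesgue continuous_on_retarded_integral cont; simp)+
    show "AE t in lebesgue_on {tmin..tmax}. (\<lambda>n. retarded_integral u (G n) t) \<longlonglongrightarrow> retarded_integral u g t"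
    proof (rule AE_I2)
      fix t assume "t \<in> space (lebesgue_on {tmin..tmax})"
      then have t: "t \<in> {tmin..tmax}" by simp
      show "(\<lambda>n. retarded_integral u (G n) t) \<longlonglongrightarrow> retarded_integral u g t"
        by (rule retarded_integral_tendsto[OF cont lim t KD[OF t] bspec[OF B t]])
    qed
    show "AE t in lebesgue_on {tmin..tmax}. norm (retarded_integral u (G n) t) \<le> measure lebesgue D * (K * B)" for n
    proof (rule AE_I2)
      fix t assume "t \<in> space (lebesgue_on {tmin..tmax})"
      then have t: "t \<in> {tmin..tmax}" by simp
      show "norm (retarded_integral u (G n) t) \<le> measure lebesgue D * (K * B)"
        by (rule norm_retarded_integral_le[OF cont(1) t KD[OF t] bspec[OF B t]])
    qed
  qed simp
qed

definition laplace_transform :: "real^3 \<Rightarrow> complex \<Rightarrow> complex" where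
  "laplace_transform u w = retarded_transform u (\<lambda>s. exp (w * of_real s))"

definition retarded_moment :: "real^3 \<Rightarrow> nat \<Rightarrow> complex" where
  "retarded_moment u n = retarded_transform u (\<lambda>s. of_real s ^ n)"

lemma laplace_transform_sums:
  "(\<lambda>n. (retarded_moment u n /\<^sub>R fact n) * w ^ n) sums laplace_transform u w"
proof -
  let ?G = "\<lambda>N s. \<Sum>n<N. (w * of_real s) ^ n /\<^sub>R fact n"
  have "(\<Sum>n<N. (retarded_moment u n /\<^sub>R fact n) * w ^ n) = retarded_transform u (?G N)" for N
  proof -
    have "(\<Sum>n<N. (retarded_moment u n /\<^sub>R fact n) * w ^ n)
        = (\<Sum>n<N. (w ^ n /\<^sub>R fact n) * retarded_moment u n)"
      by (simp add: scaleR_conv_of_real mult_ac)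
    also have "\<dots> = retarded_transform u (\<lambda>s. \<Sum>n<N. (w ^ n /\<^sub>R fact n) * of_real s ^ n)"
      unfolding retarded_moment_def by (rule retarded_transform_sum[symmetric]) (intro continuous_intros)
    also have "(\<lambda>s. \<Sum>n<N. (w ^ n /\<^sub>R fact n) * of_real s ^ n) = ?G N"
      by (simp add: power_mult_distrib scaleR_conv_of_real mult_ac)
    finally show ?thesis .
  qed
  moreover have "(\<lambda>N. retarded_transform u (?G N)) \<longlonglongrightarrow> laplace_transform u w"
    unfolding laplace_transform_def
  proof (rule retarded_transform_tendsto)
    show "continuous_on UNIV (?G N)" for N
      by (intro continuous_intros)
    show "continuous_on UNIV (\<lambda>s. exp (w * of_real s))"
      by (intro continuous_intros)
    show "(\<lambda>N. ?G N s) \<longlonglongrightarrow> exp (w * of_real s)" for s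
      using exp_converges[of "w * of_real s"] by (simp add: sums_def)
    show "\<exists>K. \<forall>N s. \<bar>s\<bar> \<le> M \<longrightarrow> norm (?G N s) \<le> K" for M
    proof (intro exI allI impI)
      fix N and s :: real assume "\<bar>s\<bar> \<le> M"
      have "norm (?G N s) \<le> exp (norm w * \<bar>s\<bar>)"
        using norm_exp_partial_sum_le[where z = "w * of_real s" and N = N] by (simp add: norm_mult)
      also have "\<dots> \<le> exp (norm w * M)"
        using \<open>\<bar>s\<bar> \<le> M\<close> by (simp add: mult_left_mono)
      finally show "norm (?G N s) \<le> exp (norm w * M)" .
    qed
  qed
  ultimately show ?thesis
    unfolding sums_def by simp
qed

lemma holomorphic_laplace_transform: "laplace_transform u holomorphic_on UNIV"
proof -
  have "laplace_transform u = (\<lambda>w. \<Sum>n. (retarded_moment u n /\<^sub>R fact n) * w ^ n)"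
    using laplace_transform_sums by (auto simp: sums_iff)
  moreover have "summable (\<lambda>n. (retarded_moment u n /\<^sub>R fact n) * w ^ n)" for w
    using laplace_transform_sums by (rule sums_summable)
  ultimately show ?thesis
    unfolding holomorphic_on_open[OF open_UNIV]
    using termdiffs_strong_converges_everywhere by fastforce
qed

lemma far_field_eq_laplace_transform:
  "far_field D S tmin tmax u k = of_real (1 / sqrt (2 * pi)) * laplace_transform u (\<i> * of_real k)"
proof -
  have "exp (\<i> * of_real (k * r)) = exp (\<i> * of_real k * of_real r)" for r
    by (simp add: mult.assoc)
  moreover have "D \<in> sets lebesgue" "{tmin..tmax} \<in> sets lebesgue"
    using open_domain by auto
  ultimately show ?thesis
    unfolding far_field_def laplace_transform_def retarded_transform_def retarded_integral_def
    by (simp only: set_integral_eq_integral_lebesgue_on)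
qed

definition real_laplace :: "real^3 \<Rightarrow> real \<Rightarrow> real" where
  "real_laplace u \<sigma> =
     (\<integral>t. (\<integral>y. exp (\<sigma> * (t - u \<bullet> y)) * S y t \<partial>lebesgue_on D) \<partial>lebesgue_on {tmin..tmax})"

lemma retarded_integral_exp_of_real:
  "retarded_integral u (\<lambda>s. exp (of_real \<sigma> * of_real s)) t
     = of_real (\<integral>y. exp (\<sigma> * (t - u \<bullet> y)) * S y t \<partial>lebesgue_on D)"
  unfolding retarded_integral_def exp_of_real_mult by (rule integral_complex_of_real)

lemma laplace_transform_of_real: "laplace_transform u (of_real \<sigma>) = of_real (real_laplace u \<sigma>)"
  unfolding laplace_transform_def retarded_transform_def real_laplace_def
    retarded_integral_exp_of_real
  by (rule integral_complex_of_real)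

lemma
  shows integrable_real_laplace_integrand:
      "t \<in> {tmin..tmax} \<Longrightarrow> integrable (lebesgue_on D) (\<lambda>y. exp (\<sigma> * (t - u \<bullet> y)) * S y t)"
    and integrable_real_laplace_slice:
      "integrable (lebesgue_on {tmin..tmax}) (\<lambda>t. \<integral>y. exp (\<sigma> * (t - u \<bullet> y)) * S y t \<partial>lebesgue_on D)"
proof -
  have cont: "continuous_on UNIV (\<lambda>s. exp (of_real \<sigma> * of_real s :: complex))"
    by (intro continuous_intros)
  show "t \<in> {tmin..tmax} \<Longrightarrow> integrable (lebesgue_on D) (\<lambda>y. exp (\<sigma> * (t - u \<bullet> y)) * S y t)"
    using integrable_retarded_integrand[OF cont, of t u]
    unfolding exp_of_real_mult complex_of_real_integrable_eq .
  show "integrable (lebesgue_on {tmin..tmax}) (\<lambda>t. \<integral>y. exp (\<sigma> * (t - u \<bullet> y)) * S y t \<partial>lebesgue_on D)"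
    using integrable_retarded_integral[OF cont, of u]
    unfolding retarded_integral_exp_of_real complex_of_real_integrable_eq .
qed

lemma real_laplace_upper_bound:
  "\<exists>C. \<forall>\<sigma>\<ge>0. real_laplace u (-\<sigma>) \<le> C * exp (\<sigma> * (support_function D u - tmin))"
proof -
  obtain B where B: "\<forall>t\<in>{tmin..tmax}. AE y in lebesgue_on D. \<bar>S y t\<bar> \<le> B"
    using slice_uniform_bound by blast
  show ?thesis
  proof (intro exI allI impI)
    fix \<sigma> :: real assume "\<sigma> \<ge> 0"
    define E where "E = exp (\<sigma> * (support_function D u - tmin))"
    have "norm (exp (of_real (-\<sigma>) * of_real (t - u \<bullet> y) :: complex)) \<le> E"
      if "y \<in> D" "t \<in> {tmin..tmax}" for y t
    proof -
      have "u \<bullet> y - t \<le> support_function D u - tmin"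
        using inner_le_support_function[OF bounded_domain \<open>y \<in> D\<close>, of u] that(2) by auto
      then have "\<sigma> * (u \<bullet> y - t) \<le> \<sigma> * (support_function D u - tmin)"
        using \<open>\<sigma> \<ge> 0\<close> by (rule mult_left_mono)
      then have "-\<sigma> * (t - u \<bullet> y) \<le> \<sigma> * (support_function D u - tmin)"
        by (simp add: algebra_simps)
      then show ?thesis
        by (simp add: E_def flip: exp_of_real of_real_mult)
    qed
    then have "norm (laplace_transform u (of_real (-\<sigma>))) \<le> (tmax - tmin) * (measure lebesgue D * (E * B))"
      unfolding laplace_transform_def
      by (intro norm_retarded_transform_le B) (auto intro!: continuous_intros)
    then have "\<bar>real_laplace u (-\<sigma>)\<bar> \<le> (tmax - tmin) * (measure lebesgue D * (E * B))"
      by (simp only: laplace_transform_of_real norm_of_real)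
    then show "real_laplace u (-\<sigma>) \<le> (tmax - tmin) * (measure lebesgue D * B) * E"
      by (simp add: mult_ac)
  qed
qed

lemma AE_real_laplace_integrand_nonneg:
  assumes "t \<in> {tmin..tmax}"
  shows "AE y in lebesgue_on D. 0 \<le> exp (\<sigma> * (t - u \<bullet> y)) * S y t"
proof -
  obtain c0 where "c0 > 0" and "\<forall>t\<in>{tmin..tmax}. AE y in lebesgue_on D. c0 \<le> S y t"
    using slice_lower_bound by blast
  then have "AE y in lebesgue_on D. c0 \<le> S y t"
    using assms by blast
  then show ?thesis
    by eventually_elim (use \<open>c0 > 0\<close> in simp)
qed

lemma real_laplace_slice_lower_bound:
  assumes "\<sigma> \<ge> 0" "t \<in> {tmin..tmax}" "c0 > 0" and c0: "AE y in lebesgue_on D. c0 \<le> S y t"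
  shows "measure lebesgue {y \<in> D. a < u \<bullet> y} * (c0 * exp (\<sigma> * (a - t)))
    \<le> (\<integral>y. exp (-\<sigma> * (t - u \<bullet> y)) * S y t \<partial>lebesgue_on D)"
proof -
  define U where "U = {y \<in> D. a < u \<bullet> y}"
  have "D \<in> sets lebesgue" "{y. a < u \<bullet> y} \<in> sets lebesgue"
    using open_domain by (auto simp: open_halfspace_gt)
  moreover have "U = D \<inter> {y. a < u \<bullet> y}"
    unfolding U_def by blast
  ultimately have U_sets: "U \<in> sets (lebesgue_on D)"
    and measure_U: "measure (lebesgue_on D) U = measure lebesgue U"
    by (auto simp: sets_restrict_space_iff measure_restrict_space)
  have "AE y in lebesgue_on D. y \<in> U \<longrightarrow> c0 * exp (\<sigma> * (a - t)) \<le> exp (-\<sigma> * (t - u \<bullet> y)) * S y t"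
    using c0
  proof (eventually_elim, intro impI)
    case (elim y)
    assume "y \<in> U"
    then have "\<sigma> * (a - t) \<le> \<sigma> * (u \<bullet> y - t)"
      using \<open>\<sigma> \<ge> 0\<close> by (intro mult_left_mono) (auto simp: U_def)
    then have "exp (\<sigma> * (a - t)) \<le> exp (-\<sigma> * (t - u \<bullet> y))"
      by (simp add: algebra_simps)
    then show "c0 * exp (\<sigma> * (a - t)) \<le> exp (-\<sigma> * (t - u \<bullet> y)) * S y t"
      using elim \<open>c0 > 0\<close> by (subst mult.commute) (intro mult_mono, auto)
  qed
  then have "measure (lebesgue_on D) U * (c0 * exp (\<sigma> * (a - t)))
      \<le> (\<integral>y. exp (-\<sigma> * (t - u \<bullet> y)) * S y t \<partial>lebesgue_on D)"
    by (intro spatial.measure_mult_le_integral integrable_real_laplace_integrand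
        AE_real_laplace_integrand_nonneg U_sets assms(2))
  then show ?thesis
    using measure_U by (simp add: U_def)
qed

lemma real_laplace_lower_bound:
  assumes "e > 0"
  shows "\<exists>c>0. \<forall>\<sigma>\<ge>0. c * exp (\<sigma> * (support_function D u - tmin - e)) \<le> real_laplace u (-\<sigma>)"
proof -
  define h where "h = support_function D u"
  define m where "m = measure lebesgue {y \<in> D. h - e / 2 < u \<bullet> y}"
  define \<delta> where "\<delta> = min (e / 2) (tmax - tmin)"
  have "\<delta> > 0"
    using \<open>e > 0\<close> tmin_less_tmax by (simp add: \<delta>_def)
  have "m > 0"
    unfolding m_def h_def using \<open>e > 0\<close> open_domain bounded_domain domain_nonempty
    by (intro measure_pos_near_support_function) auto
  obtain c0 where "c0 > 0" and c0: "\<forall>t\<in>{tmin..tmax}. AE y in lebesgue_on D. c0 \<le> S y t"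
    using slice_lower_bound by blast
  show ?thesis
  proof (intro exI[of _ "\<delta> * (m * c0)"] conjI allI impI)
    show "\<delta> * (m * c0) > 0"
      using \<open>\<delta> > 0\<close> \<open>m > 0\<close> \<open>c0 > 0\<close> by simp
    fix \<sigma> :: real assume "\<sigma> \<ge> 0"
    define E where "E = exp (\<sigma> * (h - tmin - e))"
    let ?f = "\<lambda>t. \<integral>y. exp (-\<sigma> * (t - u \<bullet> y)) * S y t \<partial>lebesgue_on D"
    have slice_ge: "m * (c0 * E) \<le> ?f t" if "t \<in> {tmin..tmin + \<delta>}" for t
    proof -
      have t: "t \<in> {tmin..tmax}"
        using that by (auto simp: \<delta>_def)
      have "\<sigma> * (h - tmin - e) \<le> \<sigma> * (h - e / 2 - t)"
        using that \<open>\<sigma> \<ge> 0\<close> by (intro mult_left_mono) (auto simp: \<delta>_def)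
      then have "m * (c0 * E) \<le> m * (c0 * exp (\<sigma> * (h - e / 2 - t)))"
        using \<open>m > 0\<close> \<open>c0 > 0\<close> by (simp add: E_def)
      also have "\<dots> \<le> ?f t"
        unfolding m_def using \<open>\<sigma> \<ge> 0\<close> t \<open>c0 > 0\<close> c0 by (intro real_laplace_slice_lower_bound) auto
      finally show ?thesis .
    qed
    have "measure (lebesgue_on {tmin..tmax}) {tmin..tmin + \<delta>} * (m * (c0 * E)) \<le> real_laplace u (-\<sigma>)"
      unfolding real_laplace_def
    proof (rule temporal.measure_mult_le_integral[OF integrable_real_laplace_slice])
      show "{tmin..tmin + \<delta>} \<in> sets (lebesgue_on {tmin..tmax})"
        by (auto simp: sets_restrict_space_iff \<delta>_def)
      show "AE t in lebesgue_on {tmin..tmax}. 0 \<le> ?f t"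
      proof (rule AE_I2)
        fix t assume "t \<in> space (lebesgue_on {tmin..tmax})"
        then show "0 \<le> ?f t"
          by (intro integral_nonneg_AE AE_real_laplace_integrand_nonneg) simp
      qed
      show "AE t in lebesgue_on {tmin..tmax}. t \<in> {tmin..tmin + \<delta>} \<longrightarrow> m * (c0 * E) \<le> ?f t"
        using slice_ge by (intro AE_I2) auto
    qed
    moreover have "measure (lebesgue_on {tmin..tmax}) {tmin..tmin + \<delta>} = \<delta>"
      using \<open>\<delta> > 0\<close> by (subst measure_lebesgue_on_Icc) (auto simp: \<delta>_def)
    ultimately show "\<delta> * (m * c0) * exp (\<sigma> * (support_function D u - tmin - e)) \<le> real_laplace u (-\<sigma>)"
      by (simp add: E_def h_def mult_ac)
  qed
qed

end

lemma support_function_le_of_real_laplace_eq: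
  assumes "source D S tmin tmax" and "source D' S' tmin tmax'"
    and eq: "\<And>\<sigma>. source.real_laplace D S tmin tmax u \<sigma> = source.real_laplace D' S' tmin tmax' u \<sigma>"
  shows "support_function D' u \<le> support_function D u"
proof (rule field_le_epsilon)
  interpret s: source D S tmin tmax by fact
  interpret s': source D' S' tmin tmax' by fact
  fix e :: real assume "e > 0"
  obtain C where C: "\<forall>\<sigma>\<ge>0. s.real_laplace u (-\<sigma>) \<le> C * exp (\<sigma> * (support_function D u - tmin))"
    using s.real_laplace_upper_bound by blast
  obtain c where "c > 0"
    and c: "\<forall>\<sigma>\<ge>0. c * exp (\<sigma> * (support_function D' u - tmin - e)) \<le> s'.real_laplace u (-\<sigma>)"
    using s'.real_laplace_lower_bound[OF \<open>e > 0\<close>] by blast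
  have "support_function D' u - tmin - e \<le> support_function D u - tmin"
    using \<open>c > 0\<close> by (rule exp_growth_le) (use C c eq in \<open>fastforce intro: order_trans\<close>)
  then show "support_function D' u \<le> support_function D u + e"
    by simp
qed

theorem mainTheorem8:
  fixes D D' :: "(real^3) set" and S S' :: "real^3 \<Rightarrow> real \<Rightarrow> real"
    and tmin tmax tmax' kmin kmax :: real
  assumes "standing D S tmin tmax"
    and "standing D' S' tmin tmax'"
    and "0 \<le> kmin" and "kmin < kmax"
    and "\<forall>xh\<in>sphere 0 1. \<forall>k\<in>{kmin..kmax}.
           far_field D S tmin tmax xh k = far_field D' S' tmin tmax' xh k"
  shows "convex hull D = convex hull D'"
proof -
  interpret s: source D S tmin tmax by (rule source.intro) fact
  interpret s': source D' S' tmin tmax' by (rule source.intro) fact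
  have support_eq: "support_function D u = support_function D' u" if "norm u = 1" for u
  proof -
    have "s.laplace_transform u (\<i> * of_real k) = s'.laplace_transform u (\<i> * of_real k)"
      if "k \<in> {kmin..kmax}" for k
      using assms(5) \<open>norm u = 1\<close> that
      by (simp add: s.far_field_eq_laplace_transform s'.far_field_eq_laplace_transform)
    then have "s.laplace_transform u = s'.laplace_transform u"
      by (rule entire_eq_of_eq_on_imaginary_segment[OF s.holomorphic_laplace_transform
          s'.holomorphic_laplace_transform \<open>kmin < kmax\<close>])
    then have "s.real_laplace u \<sigma> = s'.real_laplace u \<sigma>" for \<sigma>
      by (metis s.laplace_transform_of_real s'.laplace_transform_of_real of_real_eq_iff)
    then show ?thesis
      using support_function_le_of_real_laplace_eq s.source_axioms s'.source_axioms
      by (metis order_antisym)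
  qed
  have "closure (convex hull D) = closure (convex hull D')"
    using support_eq s.bounded_domain s'.bounded_domain s.domain_nonempty s'.domain_nonempty
    by (intro equalityI closure_convex_hull_subset_of_support_function_le) auto
  then show ?thesis
    using s.open_domain s'.open_domain by (rule convex_hull_eq_of_closure_eq[rotated 2])
qed

end
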